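(* Let $n\ge2$ and let $\widetilde X$ be an $n\times n$ real random matrix whose rows are independent and identically distributed random vectors in $\mathbb{R}^n$ (with arbitrary common distribution). Then for every choice of norm $\|\cdot\|$ on $\mathbb{R}^{n\times n}$, $$\mathbb{E}\big[\kappa(\widetilde X)\big]=+\infty.$$
   Context: For a norm $\|\cdot\|$ on $\mathbb{R}^{n\times n}$, the condition number of $A\in\mathbb{R}^{n\times n}$ is $\kappa(A)=\|A\|\,\|A^{-1}\|$ if $A$ is invertible and $\kappa(A)=+\infty$ otherwise. *)

theory Defs
  imports "HOL-Probability.Probability"
begin

definition is_matrix_norm :: "(real^'n^'n \<Rightarrow> real) \<Rightarrow> bool" where
  "is_matrix_norm N \<longleftrightarrow>
     (\<forall>A. 0 \<le> N A) \<and> (\<forall>A. N A = 0 \<longleftrightarrow> A = 0) \<and>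
     (\<forall>c A. N (c *\<^sub>R A) = \<bar>c\<bar> * N A) \<and>
     (\<forall>A B. N (A + B) \<le> N A + N B)"

definition cond_num :: "(real^'n^'n \<Rightarrow> real) \<Rightarrow> real^'n^'n \<Rightarrow> ennreal" where
  "cond_num N A = (if invertible A then ennreal (N A * N (matrix_inv A)) else \<top>)"

end

theory Submission
  imports Defs "HOL-Complex_Analysis.Cauchy_Integral_Theorem"
begin

(* Fix two rows i, j and condition on the other n - 2 rows. Pick an orthonormal pair a, b
   orthogonal to those rows and read the projections of rows i and j onto the plane of a, b as
   complex numbers z_i, z_j. The matrix maps this plane into span {e_i, e_j} with determinant
   D = Im (cnj z_i * z_j), and |D| <= |z_i| |z_j| |Arg z_i - Arg z_j|. For the Euclidean norm
   |A| >= |z_i| and |A^-1| >= |z_j| / (n^2 |D|); as all norms are equivalent, the condition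
   number is at least a constant times 1 / |Arg z_i - Arg z_j|. Two independent copies of an
   angle lie in a common one of K + 1 intervals of length 2 pi / K with probability at least
   1 / (K + 1) by Cauchy-Schwarz, so the expectation dominates a harmonic series. *)

section \<open>Matrix norms and measurability of the condition number\<close>

lemma convex_on_matrix_norm:
  fixes N :: "real^'n^'n \<Rightarrow> real"
  assumes "is_matrix_norm N"
  shows "convex_on UNIV N"
proof (rule convex_onI)
  fix t :: real and A B assume "0 < t" "t < 1"
  have tri: "N (X + Y) \<le> N X + N Y" and hom: "N (c *\<^sub>R X) = \<bar>c\<bar> * N X" for X Y c
    using assms unfolding is_matrix_norm_def by blast+
  have "N ((1 - t) *\<^sub>R A + t *\<^sub>R B) \<le> N ((1 - t) *\<^sub>R A) + N (t *\<^sub>R B)"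
    by (rule tri)
  also have "\<dots> = (1 - t) * N A + t * N B"
    using \<open>0 < t\<close> \<open>t < 1\<close> by (simp add: hom)
  finally show "N ((1 - t) *\<^sub>R A + t *\<^sub>R B) \<le> (1 - t) * N A + t * N B" .
qed simp

lemma continuous_on_matrix_norm:
  fixes N :: "real^'n^'n \<Rightarrow> real"
  shows "is_matrix_norm N \<Longrightarrow> continuous_on UNIV N"
  by (intro convex_on_continuous convex_on_matrix_norm) simp_all

lemma matrix_norm_bounded_below:
  fixes N :: "real^'n^'n \<Rightarrow> real"
  assumes N: "is_matrix_norm N"
  obtains c where "c > 0" "\<And>A. c * norm A \<le> N A"
proof -
  obtain A0 :: "real^'n^'n" where A0: "A0 \<in> sphere 0 1" "\<And>A. A \<in> sphere 0 1 \<Longrightarrow> N A0 \<le> N A"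
    using continuous_attains_inf[of "sphere 0 1" N] continuous_on_subset[OF continuous_on_matrix_norm[OF N]]
    by auto
  have "A0 \<noteq> 0"
    using A0(1) by auto
  then have "N A0 > 0"
    using N unfolding is_matrix_norm_def by (simp add: order_less_le)
  moreover have "N A0 * norm A \<le> N A" for A
  proof (cases "A = 0")
    case False
    then have "N A0 \<le> N ((1 / norm A) *\<^sub>R A)"
      by (intro A0(2)) simp
    also have "\<dots> = N A / norm A"
      using N unfolding is_matrix_norm_def by simp
    finally show ?thesis
      using False by (simp add: field_simps)
  qed (use N in \<open>simp add: is_matrix_norm_def\<close>)
  ultimately show ?thesis
    using that by blast
qed

lemma
  fixes A :: "'a::semiring_1^'n^'n"
  assumes "invertible A"
  shows matrix_inv_right: "A ** matrix_inv A = mat 1"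
    and matrix_inv_left: "matrix_inv A ** A = mat 1"
proof -
  have "A ** matrix_inv A = mat 1 \<and> matrix_inv A ** A = mat 1"
    using assms unfolding invertible_def matrix_inv_def by (rule someI_ex)
  then show "A ** matrix_inv A = mat 1" "matrix_inv A ** A = mat 1"
    by auto
qed

lemma matrix_inv_mult_vector_eq:
  fixes A :: "'a::comm_semiring_1^'n^'n"
  assumes "invertible A" "A *v x = y"
  shows "x = matrix_inv A *v y"
  using assms by (metis matrix_inv_left matrix_vector_mul_assoc matrix_vector_mul_lid)

lemma matrix_inv_cramer:
  fixes A :: "real^'n^'n"
  assumes "invertible A"
  shows "matrix_inv A $ i $ j = det (\<chi> k l. if l = i then axis j 1 $ k else A $ k $ l) / det A"
proof -
  have "A *v (matrix_inv A *v axis j 1) = axis j 1"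
    using assms by (simp add: matrix_vector_mul_assoc matrix_inv_right)
  then have "matrix_inv A *v axis j 1 = (\<chi> k. det (\<chi> k' l. if l = k then axis j 1 $ k' else A $ k' $ l) / det A)"
    using cramer assms invertible_det_nz by blast
  moreover have "(matrix_inv A *v axis j 1) $ i = matrix_inv A $ i $ j"
    by (simp add: matrix_vector_mult_basis column_def)
  ultimately show ?thesis
    by simp
qed

lemma borel_measurable_vec_nth [measurable]:
  "(\<lambda>x::'b::euclidean_space^'n. x $ i) \<in> borel_measurable borel"
  by (intro borel_measurable_continuous_onI continuous_intros)

lemma borel_measurable_vec_lambda:
  fixes f :: "'a \<Rightarrow> 'n::finite \<Rightarrow> 'b::euclidean_space"
  assumes "\<And>i. (\<lambda>x. f x i) \<in> borel_measurable M"
  shows "(\<lambda>x. \<chi> i. f x i) \<in> borel_measurable M"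
proof -
  have "(\<lambda>x. (\<chi> i. f x i) \<bullet> axis i u) \<in> borel_measurable M" for i and u :: 'b
    using assms by (simp add: inner_axis)
  then show ?thesis
    by (subst borel_measurable_euclidean_space) (auto simp: Basis_vec_def)
qed

lemma borel_measurable_det:
  fixes F :: "'a \<Rightarrow> real^'n^'n"
  assumes "\<And>k l. (\<lambda>x. F x $ k $ l) \<in> borel_measurable M"
  shows "(\<lambda>x. det (F x)) \<in> borel_measurable M"
  unfolding det_def
  by (intro borel_measurable_sum borel_measurable_times borel_measurable_prod borel_measurable_const assms)

lemma borel_measurable_cond_num:
  fixes N :: "real^'n^'n \<Rightarrow> real"
  assumes N: "is_matrix_norm N"
  shows "cond_num N \<in> borel_measurable borel"
proof -
  have [measurable]: "N \<in> borel_measurable borel"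
    using continuous_on_matrix_norm[OF N] by (rule borel_measurable_continuous_onI)
  have [measurable]: "(det :: real^'n^'n \<Rightarrow> real) \<in> borel_measurable borel"
    by (rule borel_measurable_det) measurable
  define inv :: "real^'n^'n \<Rightarrow> real^'n^'n" where
    "inv A = (\<chi> i j. det (\<chi> k l. if l = i then axis j 1 $ k else A $ k $ l) / det A)" for A
  have [measurable]: "inv \<in> borel_measurable borel"
    unfolding inv_def
    by (intro borel_measurable_vec_lambda borel_measurable_divide borel_measurable_det) simp_all
  have "invertible A \<Longrightarrow> matrix_inv A = inv A" for A
    by (simp add: vec_eq_iff inv_def matrix_inv_cramer)
  then have "cond_num N = (\<lambda>A. if det A = 0 then \<top> else ennreal (N A * N (inv A)))"
    by (auto simp: fun_eq_iff cond_num_def invertible_det_nz)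
  then show ?thesis
    by simp
qed

lemma borel_measurable_Arg [measurable]: "Arg \<in> borel_measurable borel"
  unfolding Arg_def[abs_def] by measurable

definition normalized_Arg :: "complex \<Rightarrow> real" where
  "normalized_Arg z = (Arg z + pi) / (2 * pi)"

lemma borel_measurable_normalized_Arg [measurable]: "normalized_Arg \<in> borel_measurable borel"
  unfolding normalized_Arg_def[abs_def] by measurable

lemma normalized_Arg_bounds: "0 \<le> normalized_Arg z \<and> normalized_Arg z \<le> 1"
  using mpi_less_Arg[of z] Arg_le_pi[of z] by (simp add: normalized_Arg_def field_simps)

lemma abs_normalized_Arg_diff: "\<bar>normalized_Arg z - normalized_Arg w\<bar> = \<bar>Arg z - Arg w\<bar> / (2 * pi)"
  by (simp add: normalized_Arg_def diff_divide_distrib[symmetric] abs_divide)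

section \<open>The condition number and angles in a plane\<close>

(* The plane spanned by an orthonormal pair a, b, identified with the complex numbers. *)
definition plane_coord :: "'a::real_inner \<Rightarrow> 'a \<Rightarrow> 'a \<Rightarrow> complex" where
  "plane_coord a b v = Complex (a \<bullet> v) (b \<bullet> v)"

definition plane_vec :: "'a::real_inner \<Rightarrow> 'a \<Rightarrow> complex \<Rightarrow> 'a" where
  "plane_vec a b w = Re w *\<^sub>R a + Im w *\<^sub>R b"

lemma borel_measurable_plane_coord [measurable]:
  "plane_coord a b \<in> borel_measurable (borel :: 'a::real_inner measure)"
proof -
  have "plane_coord a b = (\<lambda>v. complex_of_real (a \<bullet> v) + \<i> * complex_of_real (b \<bullet> v))"
    by (simp add: fun_eq_iff plane_coord_def complex_eq_iff)
  then show ?thesis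
    by (simp add: borel_measurable_continuous_onI continuous_intros)
qed

lemma inner_plane_vec: "v \<bullet> plane_vec a b w = Re (cnj (plane_coord a b v) * w)"
  by (simp add: plane_vec_def plane_coord_def inner_add_right inner_commute)

lemma norm_plane_vec:
  assumes "a \<bullet> a = 1" "b \<bullet> b = 1" "a \<bullet> b = 0"
  shows "norm (plane_vec a b w) = cmod w"
proof -
  have "norm (plane_vec a b w) ^ 2 = cmod w ^ 2"
    unfolding cmod_power2 power2_norm_eq_inner using assms
    by (simp add: plane_vec_def inner_add_left inner_add_right inner_commute power2_eq_square)
  then show ?thesis
    by (simp add: power2_eq_iff_nonneg)
qed

lemma cmod_plane_coord_le:
  assumes "a \<bullet> a = 1" "b \<bullet> b = 1" "a \<bullet> b = 0"
  shows "cmod (plane_coord a b v) \<le> norm v"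
proof -
  let ?z = "plane_coord a b v"
  have "cmod ?z ^ 2 = v \<bullet> plane_vec a b ?z"
    unfolding cmod_power2 inner_plane_vec by (simp add: power2_eq_square)
  also have "\<dots> \<le> norm v * cmod ?z"
    using norm_cauchy_schwarz[of v "plane_vec a b ?z"] norm_plane_vec[OF assms] by simp
  finally have "cmod ?z * cmod ?z \<le> norm v * cmod ?z"
    by (simp add: power2_eq_square)
  then show ?thesis
    using norm_ge_zero[of v] by (cases "?z = 0") (auto simp: mult_le_cancel_right)
qed

lemma matrix_vector_mult_plane_vec_nth:
  "(A *v plane_vec a b w) $ k = Re (cnj (plane_coord a b (A $ k)) * w)"
  by (simp only: matrix_vector_mul_component inner_plane_vec)

lemma abs_Im_cnj_mult_le_Arg_diff: "\<bar>Im (cnj z * w)\<bar> \<le> cmod z * cmod w * \<bar>Arg z - Arg w\<bar>"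
proof -
  have polar: "Re u = cmod u * cos (Arg u)" "Im u = cmod u * sin (Arg u)" for u
    by (cases "u = 0"; simp add: cos_Arg sin_Arg)+
  have "Im (cnj z * w) = Re z * Im w - Im z * Re w"
    by simp
  also have "\<dots> = cmod z * cmod w * sin (Arg w - Arg z)"
    unfolding polar[of z] polar[of w] by (simp add: sin_diff algebra_simps)
  also have "\<bar>\<dots>\<bar> \<le> cmod z * cmod w * \<bar>Arg z - Arg w\<bar>"
    using abs_sin_x_le_abs_x[of "Arg w - Arg z"] by (simp add: abs_mult mult_left_mono abs_minus_commute)
  finally show ?thesis .
qed

lemma exists_Re_cnj_mult_eq_0:
  assumes "Im (cnj z1 * z2) = 0"
  obtains w where "w \<noteq> 0" "Re (cnj z1 * w) = 0" "Re (cnj z2 * w) = 0"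
proof (cases "z1 = 0")
  case True
  show ?thesis
    by (rule that[of "if z2 = 0 then 1 else \<i> * z2"]) (auto simp: True)
next
  case False
  show ?thesis
    by (rule that[of "\<i> * z1"]) (use False assms in \<open>auto simp: algebra_simps\<close>)
qed

lemma norm_matrix_vector_mult_le:
  fixes B :: "real^'n^'m"
  shows "norm (B *v x) \<le> real CARD('m) * real CARD('n) * norm B * norm x"
proof -
  have "\<bar>B $ i $ j\<bar> \<le> norm B" for i j
    by (metis component_le_norm_cart Finite_Cartesian_Product.norm_nth_le order_trans)
  then have "onorm ((*v) B) \<le> real CARD('m) * real CARD('n) * norm B"
    by (rule onorm_le_matrix_component)
  then show ?thesis
    using onorm[OF matrix_vector_mul_bounded_linear, of B x] by (meson mult_right_mono norm_ge_zero order.trans)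
qed

lemma Im_cnj_mult_plane_coord_rows_neq_0:
  fixes A :: "real^'n^'n"
  assumes inv: "invertible A" and ab: "a \<bullet> a = 1" "b \<bullet> b = 1" "a \<bullet> b = 0"
    and others: "\<And>k. k \<noteq> i \<Longrightarrow> k \<noteq> j \<Longrightarrow> plane_coord a b (A $ k) = 0"
  shows "Im (cnj (plane_coord a b (A $ i)) * plane_coord a b (A $ j)) \<noteq> 0"
proof
  assume "Im (cnj (plane_coord a b (A $ i)) * plane_coord a b (A $ j)) = 0"
  then obtain w where w: "w \<noteq> 0" "Re (cnj (plane_coord a b (A $ i)) * w) = 0"
      "Re (cnj (plane_coord a b (A $ j)) * w) = 0"
    by (rule exists_Re_cnj_mult_eq_0)
  have "Re (cnj (plane_coord a b (A $ k)) * w) = 0" for k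
    by (cases "k = i"; cases "k = j") (use w others in auto)
  then have "A *v plane_vec a b w = 0"
    by (simp add: vec_eq_iff matrix_vector_mult_plane_vec_nth)
  then have "plane_vec a b w = matrix_inv A *v 0"
    by (rule matrix_inv_mult_vector_eq[OF inv])
  then show False
    using w(1) norm_plane_vec[OF ab, of w] by simp
qed

lemma norm_mult_norm_matrix_inv_ge:
  fixes A :: "real^'n^'n"
  assumes inv: "invertible A" and "i \<noteq> j"
    and ab: "a \<bullet> a = 1" "b \<bullet> b = 1" "a \<bullet> b = 0"
    and others: "\<And>k. k \<noteq> i \<Longrightarrow> k \<noteq> j \<Longrightarrow> plane_coord a b (A $ k) = 0"
    and "\<delta> > 0" and angle: "\<bar>Arg (plane_coord a b (A $ i)) - Arg (plane_coord a b (A $ j))\<bar> \<le> \<delta>"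
  shows "1 / (real CARD('n) ^ 2 * \<delta>) \<le> norm A * norm (matrix_inv A)"
proof -
  define z where "z k = plane_coord a b (A $ k)" for k
  define D where "D = Im (cnj (z i) * z j)"
  have "D \<noteq> 0"
    unfolding D_def z_def by (rule Im_cnj_mult_plane_coord_rows_neq_0[OF inv ab others])
  (* Rotating z_j by a right angle gives a point of the plane orthogonal to the projection of
     row j; A sends it to -D e_i, which bounds the norm of the inverse from below. *)
  have "(A *v plane_vec a b (\<i> * z j)) $ k = ((- D) *\<^sub>R axis i 1) $ k" for k
    by (cases "k = i"; cases "k = j")
      (use \<open>i \<noteq> j\<close> others in \<open>auto simp: matrix_vector_mult_plane_vec_nth D_def z_def axis_def algebra_simps\<close>)
  then have "plane_vec a b (\<i> * z j) = matrix_inv A *v ((- D) *\<^sub>R axis i 1)"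
    by (intro matrix_inv_mult_vector_eq[OF inv]) (simp add: vec_eq_iff)
  then have "cmod (z j) = norm (matrix_inv A *v ((- D) *\<^sub>R axis i 1))"
    using norm_plane_vec[OF ab, of "\<i> * z j"] by (simp add: norm_mult)
  also have "\<dots> \<le> real CARD('n) * real CARD('n) * norm (matrix_inv A) * norm ((- D) *\<^sub>R axis i (1::real))"
    by (rule norm_matrix_vector_mult_le)
  finally have zj: "cmod (z j) \<le> real CARD('n) ^ 2 * norm (matrix_inv A) * \<bar>D\<bar>"
    by (simp add: power2_eq_square)
  have zi: "cmod (z i) \<le> norm A"
    using cmod_plane_coord_le[OF ab] Finite_Cartesian_Product.norm_nth_le order_trans
    unfolding z_def by blast
  have "\<bar>D\<bar> \<le> cmod (z i) * cmod (z j) * \<delta>"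
    unfolding D_def z_def
    by (rule order_trans[OF abs_Im_cnj_mult_le_Arg_diff mult_left_mono[OF angle]]) simp
  also have "\<dots> \<le> norm A * (real CARD('n) ^ 2 * norm (matrix_inv A) * \<bar>D\<bar>) * \<delta>"
    using zi zj \<open>\<delta> > 0\<close> by (intro mult_right_mono mult_mono) auto
  finally have "1 \<le> real CARD('n) ^ 2 * \<delta> * (norm A * norm (matrix_inv A))"
    using \<open>D \<noteq> 0\<close> by (simp add: algebra_simps)
  then show ?thesis
    using \<open>\<delta> > 0\<close> by (simp add: field_simps)
qed

lemma cond_num_ge_normalized_Arg_diff:
  fixes A :: "real^'n^'n"
  assumes c: "c > 0" "\<And>B. c * norm B \<le> N B"
    and "i \<noteq> j" and "a \<bullet> a = 1" "b \<bullet> b = 1" "a \<bullet> b = 0"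
    and "\<And>k. k \<noteq> i \<Longrightarrow> k \<noteq> j \<Longrightarrow> plane_coord a b (A $ k) = 0"
    and "t > 0"
    and close: "\<bar>normalized_Arg (plane_coord a b (A $ i)) - normalized_Arg (plane_coord a b (A $ j))\<bar> \<le> t"
  shows "ennreal (c\<^sup>2 / (real CARD('n) ^ 2 * (2 * pi)) / t) \<le> cond_num N A"
proof (cases "invertible A")
  case True
  have "\<bar>Arg (plane_coord a b (A $ i)) - Arg (plane_coord a b (A $ j))\<bar> \<le> 2 * pi * t"
    using close by (simp add: abs_normalized_Arg_diff divide_le_eq mult.commute)
  then have "1 / (real CARD('n) ^ 2 * (2 * pi * t)) \<le> norm A * norm (matrix_inv A)"
    using \<open>t > 0\<close> by (intro norm_mult_norm_matrix_inv_ge[OF True assms(3-7)]) simp_all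
  then have "c\<^sup>2 * (1 / (real CARD('n) ^ 2 * (2 * pi * t))) \<le> c\<^sup>2 * (norm A * norm (matrix_inv A))"
    by (rule mult_left_mono) simp
  moreover have "c\<^sup>2 / (real CARD('n) ^ 2 * (2 * pi)) / t = c\<^sup>2 * (1 / (real CARD('n) ^ 2 * (2 * pi * t)))"
    by simp
  ultimately have "c\<^sup>2 / (real CARD('n) ^ 2 * (2 * pi)) / t \<le> c\<^sup>2 * (norm A * norm (matrix_inv A))"
    by simp
  also have "\<dots> = (c * norm A) * (c * norm (matrix_inv A))"
    by (simp add: power2_eq_square)
  also have "\<dots> \<le> N A * N (matrix_inv A)"
    using c by (intro mult_mono) (auto intro: order_trans[OF _ c(2)])
  finally show ?thesis
    using True by (simp add: cond_num_def ennreal_leI)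
qed (simp add: cond_num_def)

lemma exists_orthonormal_pair_orthogonal:
  fixes S :: "'a::euclidean_space set"
  assumes "finite S" "card S + 2 \<le> DIM('a)"
  obtains a b where "a \<bullet> a = 1" "b \<bullet> b = 1" "a \<bullet> b = 0" "\<And>y. y \<in> S \<Longrightarrow> a \<bullet> y = 0 \<and> b \<bullet> y = 0"
proof -
  have "dim S \<le> card S"
    using assms(1) by (intro dim_le_card) (auto intro: span_base)
  with assms(2) have "dim S < DIM('a)"
    by linarith
  then obtain a0 where a0: "a0 \<noteq> 0" "\<And>y. y \<in> span S \<Longrightarrow> orthogonal a0 y"
    using orthogonal_to_subspace_exists by blast
  have "dim (insert a0 S) \<le> card (insert a0 S)"
    using assms(1) by (intro dim_le_card) (auto intro: span_base)
  also have "\<dots> \<le> card S + 1"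
    using assms(1) by (simp add: card_insert_if)
  finally have "dim (insert a0 S) < DIM('a)"
    using assms(2) by linarith
  then obtain b0 where b0: "b0 \<noteq> 0" "\<And>y. y \<in> span (insert a0 S) \<Longrightarrow> orthogonal b0 y"
    using orthogonal_to_subspace_exists by blast
  show ?thesis
  proof (rule that[of "a0 /\<^sub>R norm a0" "b0 /\<^sub>R norm b0"])
    show "(a0 /\<^sub>R norm a0) \<bullet> (a0 /\<^sub>R norm a0) = 1" "(b0 /\<^sub>R norm b0) \<bullet> (b0 /\<^sub>R norm b0) = 1"
      using a0(1) b0(1) by (simp_all add: dot_square_norm power2_eq_square)
    have "orthogonal b0 a0"
      using b0(2) by (auto intro: span_base)
    then show "(a0 /\<^sub>R norm a0) \<bullet> (b0 /\<^sub>R norm b0) = 0"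
      by (simp add: orthogonal_def inner_commute)
    show "(a0 /\<^sub>R norm a0) \<bullet> y = 0 \<and> (b0 /\<^sub>R norm b0) \<bullet> y = 0" if "y \<in> S" for y
    proof -
      have "orthogonal a0 y" "orthogonal b0 y"
        using a0(2) b0(2) that by (auto intro: span_base)
      then show ?thesis
        by (simp add: orthogonal_def)
    qed
  qed
qed

lemma exists_plane_orthogonal_other_rows:
  fixes \<rho> :: "'n \<Rightarrow> real^'n"
  assumes "i \<noteq> j"
  obtains a b where "a \<bullet> a = 1" "b \<bullet> b = 1" "a \<bullet> b = 0"
    "\<And>k. k \<noteq> i \<Longrightarrow> k \<noteq> j \<Longrightarrow> plane_coord a b (\<rho> k) = 0"
proof -
  have "card (- {i, j} :: 'n set) = CARD('n) - 2"
    using assms by (simp add: Compl_eq_Diff_UNIV card_Diff_subset)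
  then have "card (\<rho> ` (- {i, j})) \<le> CARD('n) - 2"
    using card_image_le[of "- {i, j}" \<rho>] by simp
  moreover have "2 \<le> CARD('n)"
    using card_mono[of UNIV "{i, j}"] assms by simp
  ultimately have "card (\<rho> ` (- {i, j})) + 2 \<le> DIM(real^'n)"
    by simp
  then obtain a b where ab: "a \<bullet> a = 1" "b \<bullet> b = 1" "a \<bullet> b = 0"
    and orth: "\<And>y. y \<in> \<rho> ` (- {i, j}) \<Longrightarrow> a \<bullet> y = 0 \<and> b \<bullet> y = 0"
    using exists_orthonormal_pair_orthogonal[OF finite_imageI[OF finite]] by blast
  have "plane_coord a b (\<rho> k) = 0" if "k \<noteq> i" "k \<noteq> j" for k
    using orth[of "\<rho> k"] that by (simp add: plane_coord_def complex_eq_iff)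
  with ab that show ?thesis
    by blast
qed

section \<open>Two independent angles are often close\<close>

lemma measure_PiM_pair_same_cell_ge:
  fixes \<mu> :: "'b measure" and T :: "'c \<Rightarrow> 'b set" and i j :: 'i
  assumes \<mu>: "prob_space \<mu>" and "i \<noteq> j" and S: "finite S"
    and T: "\<And>s. s \<in> S \<Longrightarrow> T s \<in> sets \<mu>" "disjoint_family_on T S" "(\<Union>s\<in>S. T s) = space \<mu>"
  shows "1 / card S \<le> measure (PiM {i, j} (\<lambda>_. \<mu>)) (\<Union>s\<in>S. PiE {i, j} (\<lambda>_. T s))"
proof -
  interpret \<mu>: prob_space \<mu> by (rule \<mu>)
  interpret P: prob_space "PiM {i, j} (\<lambda>_. \<mu>)" by (intro prob_space_PiM \<mu>)
  interpret product_sigma_finite "\<lambda>_::'i. \<mu>"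
    by (simp add: product_sigma_finite_def \<mu>.sigma_finite_measure_axioms)
  have cell: "measure (PiM {i, j} (\<lambda>_. \<mu>)) (PiE {i, j} (\<lambda>_. T s)) = measure \<mu> (T s) ^ 2"
    if "s \<in> S" for s
  proof -
    have "emeasure (PiM {i, j} (\<lambda>_. \<mu>)) (PiE {i, j} (\<lambda>_. T s)) = (\<Prod>_\<in>{i, j}. emeasure \<mu> (T s))"
      using T(1)[OF that] by (intro emeasure_PiM) auto
    also have "\<dots> = ennreal (measure \<mu> (T s) ^ 2)"
      using \<open>i \<noteq> j\<close> by (simp add: \<mu>.emeasure_eq_measure power2_eq_square ennreal_mult)
    finally show ?thesis
      by (simp add: measure_def)
  qed
  have "disjoint_family_on (\<lambda>s. PiE {i, j} (\<lambda>_. T s)) S"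
    unfolding disjoint_family_on_def
  proof (intro ballI impI)
    fix s t assume "s \<in> S" "t \<in> S" "s \<noteq> t"
    then have "T s \<inter> T t = {}"
      using T(2) unfolding disjoint_family_on_def by blast
    moreover have "x i \<in> T s \<inter> T t" if "x \<in> PiE {i, j} (\<lambda>_. T s)" "x \<in> PiE {i, j} (\<lambda>_. T t)" for x
      using that by (auto simp: PiE_iff)
    ultimately show "PiE {i, j} (\<lambda>_. T s) \<inter> PiE {i, j} (\<lambda>_. T t) = {}"
      by blast
  qed
  then have "measure (PiM {i, j} (\<lambda>_. \<mu>)) (\<Union>s\<in>S. PiE {i, j} (\<lambda>_. T s)) = (\<Sum>s\<in>S. measure \<mu> (T s) ^ 2)"
    using S T(1) by (subst measure_finite_Union) (auto intro!: sets_PiM_I_finite simp: cell P.emeasure_finite)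
  moreover have "(\<Sum>s\<in>S. measure \<mu> (T s)) = 1"
    using S T \<mu>.prob_space by (subst measure_finite_Union[symmetric]) (auto simp: \<mu>.emeasure_finite)
  moreover have "(\<Sum>s\<in>S. measure \<mu> (T s))\<^sup>2 \<le> (\<Sum>s\<in>S. measure \<mu> (T s) ^ 2) * card S"
    by (rule sum_squared_le_sum_of_squares)
  ultimately show ?thesis
    by (cases "card S = 0") (simp_all add: field_simps)
qed

lemma measure_PiM_pair_close_ge:
  fixes \<mu> :: "'b measure" and \<psi> :: "'b \<Rightarrow> real" and i j :: 'i
  assumes \<mu>: "prob_space \<mu>" and "i \<noteq> j" and [measurable]: "\<psi> \<in> borel_measurable \<mu>"
    and range: "\<And>x. x \<in> space \<mu> \<Longrightarrow> 0 \<le> \<psi> x \<and> \<psi> x \<le> 1"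
  shows "1 / Suc (Suc n) \<le> measure (PiM {i, j} (\<lambda>_. \<mu>))
           {x \<in> space (PiM {i, j} (\<lambda>_. \<mu>)). \<bar>\<psi> (x i) - \<psi> (x j)\<bar> < 1 / Suc n}"
proof -
  interpret P: prob_space "PiM {i, j} (\<lambda>_. \<mu>)" by (intro prob_space_PiM \<mu>)
  define T where "T s = {x \<in> space \<mu>. real s \<le> Suc n * \<psi> x \<and> Suc n * \<psi> x < real s + 1}" for s :: nat
  have cover: "(\<Union>s\<in>{..Suc n}. T s) = space \<mu>"
  proof (intro equalityI subsetI)
    fix x assume x: "x \<in> space \<mu>"
    define s where "s = nat \<lfloor>Suc n * \<psi> x\<rfloor>"
    have "0 \<le> Suc n * \<psi> x" "Suc n * \<psi> x \<le> Suc n"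
      using range[OF x] by (auto simp: mult_left_le)
    moreover have "real s = of_int \<lfloor>Suc n * \<psi> x\<rfloor>"
      using calculation(1) by (simp add: s_def)
    ultimately have "real s \<le> Suc n * \<psi> x" "Suc n * \<psi> x < real s + 1" "s \<le> Suc n"
      by linarith+
    then show "x \<in> (\<Union>s\<in>{..Suc n}. T s)"
      using x by (auto simp: T_def)
  qed (auto simp: T_def)
  have disjoint: "disjoint_family_on T {..Suc n}"
    unfolding disjoint_family_on_def T_def by auto
  have "T s \<in> sets \<mu>" for s
    unfolding T_def by measurable
  from measure_PiM_pair_same_cell_ge[OF \<mu> \<open>i \<noteq> j\<close> finite_atMost this disjoint cover]
  have "1 / card {..Suc n} \<le> measure (PiM {i, j} (\<lambda>_. \<mu>)) (\<Union>s\<in>{..Suc n}. PiE {i, j} (\<lambda>_. T s))" .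
  also have "\<dots> \<le> measure (PiM {i, j} (\<lambda>_. \<mu>)) {x \<in> space (PiM {i, j} (\<lambda>_. \<mu>)). \<bar>\<psi> (x i) - \<psi> (x j)\<bar> < 1 / Suc n}"
  proof (intro P.finite_measure_mono subsetI)
    fix x assume "x \<in> (\<Union>s\<in>{..Suc n}. PiE {i, j} (\<lambda>_. T s))"
    then obtain s where "x i \<in> T s" "x j \<in> T s" and "x \<in> space (PiM {i, j} (\<lambda>_. \<mu>))"
      by (auto simp: space_PiM T_def)
    then show "x \<in> {x \<in> space (PiM {i, j} (\<lambda>_. \<mu>)). \<bar>\<psi> (x i) - \<psi> (x j)\<bar> < 1 / Suc n}"
      by (auto simp: T_def field_simps abs_less_iff)
  qed measurable
  finally show ?thesis
    by (simp only: card_atMost)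
qed

lemma cmult_sum_indicator_le:
  fixes F :: "'a \<Rightarrow> ennreal" and B :: "nat \<Rightarrow> 'a set" and C :: real
  assumes "C > 0" and bound: "\<And>n x. x \<in> B n \<Longrightarrow> ennreal (C * Suc n) \<le> F x"
  shows "ennreal C * (\<Sum>n<m. indicator (B n) x) \<le> F x"
proof -
  define S where "S = {n \<in> {..<m}. x \<in> B n}"
  have sum: "(\<Sum>n<m. indicator (B n) x :: ennreal) = of_nat (card S)"
    unfolding S_def by (simp add: indicator_def sum.If_cases Int_def)
  have "finite S"
    by (simp add: S_def)
  show ?thesis
  proof (cases "S = {}")
    case False
    then have "x \<in> B (Max S)"
      using Max_in[OF \<open>finite S\<close>] by (auto simp: S_def)
    have "ennreal C * (\<Sum>n<m. indicator (B n) x) = ennreal (C * card S)"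
      using sum \<open>C > 0\<close> by (simp add: ennreal_mult ennreal_of_nat_eq_real_of_nat)
    also have "\<dots> \<le> ennreal (C * Suc (Max S))"
      using card_le_Suc_Max[OF \<open>finite S\<close>] \<open>C > 0\<close> by (intro ennreal_leI mult_left_mono) simp_all
    also have "\<dots> \<le> F x"
      using bound[OF \<open>x \<in> B (Max S)\<close>] by simp
    finally show ?thesis .
  qed (simp add: sum)
qed

lemma nn_integral_eq_top_if_harmonic_events:
  fixes F :: "'a \<Rightarrow> ennreal" and B :: "nat \<Rightarrow> 'a set" and C :: real
  assumes B: "\<And>n. B n \<in> sets M" and "C > 0"
    and prob: "\<And>n. ennreal (1 / Suc (Suc n)) \<le> emeasure M (B n)"
    and bound: "\<And>n x. x \<in> B n \<Longrightarrow> ennreal (C * Suc n) \<le> F x"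
  shows "(\<integral>\<^sup>+x. F x \<partial>M) = \<infinity>"
proof -
  have "ennreal C * (\<Sum>n<m. ennreal (1 / Suc (Suc n))) \<le> (\<integral>\<^sup>+x. F x \<partial>M)" for m
  proof -
    have "ennreal C * (\<Sum>n<m. ennreal (1 / Suc (Suc n))) \<le> ennreal C * (\<Sum>n<m. emeasure M (B n))"
      by (intro mult_left_mono sum_mono prob) simp
    also have "\<dots> = ennreal C * (\<integral>\<^sup>+x. (\<Sum>n<m. indicator (B n) x) \<partial>M)"
      using B by (subst nn_integral_sum) auto
    also have "\<dots> = (\<integral>\<^sup>+x. ennreal C * (\<Sum>n<m. indicator (B n) x) \<partial>M)"
      using B by (subst nn_integral_cmult) auto
    also have "\<dots> \<le> (\<integral>\<^sup>+x. F x \<partial>M)"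
      using cmult_sum_indicator_le[OF \<open>C > 0\<close> bound] by (intro nn_integral_mono)
    finally show ?thesis .
  qed
  then have "ennreal C * (\<Sum>n. ennreal (1 / Suc (Suc n))) \<le> (\<integral>\<^sup>+x. F x \<partial>M)"
    unfolding suminf_eq_SUP SUP_mult_left_ennreal by (rule SUP_least)
  moreover have "\<not> summable (\<lambda>n. 1 / real (Suc (Suc n)))"
    using not_summable_harmonic[where 'a=real] summable_Suc_iff[where f="\<lambda>n. 1 / real n"]
      summable_Suc_iff[where f="\<lambda>n. 1 / real (Suc n)"]
    by (simp add: inverse_eq_divide)
  then have "(\<Sum>n. ennreal (1 / Suc (Suc n))) = \<top>"
    by (intro summable_iff_suminf_neq_top) auto
  ultimately have "\<top> \<le> (\<integral>\<^sup>+x. F x \<partial>M)"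
    using \<open>C > 0\<close> by (simp add: ennreal_mult_top)
  then show ?thesis
    by (simp add: top_unique)
qed

section \<open>Matrices with independent identically distributed rows\<close>

lemma nn_integral_cond_num_pair_eq_top:
  fixes N :: "real^'n^'n \<Rightarrow> real" and \<mu> :: "(real^'n) measure" and \<rho> :: "'n \<Rightarrow> real^'n"
  assumes N: "is_matrix_norm N" and \<mu>: "prob_space \<mu>" "sets \<mu> = sets borel" and "i \<noteq> j"
  shows "(\<integral>\<^sup>+x. cond_num N (\<chi> k. if k \<in> {i, j} then x k else \<rho> k) \<partial>PiM {i, j} (\<lambda>_. \<mu>)) = \<infinity>"
proof -
  interpret P: prob_space "PiM {i, j} (\<lambda>_. \<mu>)" by (intro prob_space_PiM \<mu>)
  obtain c where c: "c > 0" "\<And>A. c * norm A \<le> N A"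
    using matrix_norm_bounded_below[OF N] by blast
  obtain a b where ab: "a \<bullet> a = 1" "b \<bullet> b = 1" "a \<bullet> b = 0"
    and orth: "\<And>k. k \<noteq> i \<Longrightarrow> k \<noteq> j \<Longrightarrow> plane_coord a b (\<rho> k) = 0"
    using exists_plane_orthogonal_other_rows[OF \<open>i \<noteq> j\<close>] by blast
  define \<psi> where "\<psi> v = normalized_Arg (plane_coord a b v)" for v
  have [measurable]: "\<psi> \<in> borel_measurable \<mu>"
    unfolding \<psi>_def measurable_cong_sets[OF \<mu>(2) refl] by measurable
  define C where "C = c\<^sup>2 / (real CARD('n) ^ 2 * (2 * pi))"
  define B where "B n = {x \<in> space (PiM {i, j} (\<lambda>_. \<mu>)). \<bar>\<psi> (x i) - \<psi> (x j)\<bar> < 1 / Suc n}" for n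
  show ?thesis
  proof (rule nn_integral_eq_top_if_harmonic_events)
    show "B n \<in> sets (PiM {i, j} (\<lambda>_. \<mu>))" for n
      unfolding B_def by measurable
    show "C > 0"
      using c(1) by (simp add: C_def)
    show "ennreal (1 / Suc (Suc n)) \<le> emeasure (PiM {i, j} (\<lambda>_. \<mu>)) (B n)" for n
      using measure_PiM_pair_close_ge[OF \<mu>(1) \<open>i \<noteq> j\<close>, of \<psi> n]
      by (simp add: B_def \<psi>_def normalized_Arg_bounds P.emeasure_eq_measure ennreal_leI)
    show "ennreal (C * Suc n) \<le> cond_num N (\<chi> k. if k \<in> {i, j} then x k else \<rho> k)"
      if "x \<in> B n" for n x
    proof -
      have "ennreal (C / (1 / Suc n)) \<le> cond_num N (\<chi> k. if k \<in> {i, j} then x k else \<rho> k)"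
        unfolding C_def using that orth
        by (intro cond_num_ge_normalized_Arg_diff[OF c \<open>i \<noteq> j\<close> ab]) (auto simp: B_def \<psi>_def)
      then show ?thesis
        by simp
    qed
  qed
qed

lemma nn_integral_cond_num_iid_rows_eq_top:
  fixes N :: "real^'n^'n \<Rightarrow> real" and \<mu> :: "(real^'n) measure" and i j :: 'n
  assumes N: "is_matrix_norm N" and \<mu>: "prob_space \<mu>" "sets \<mu> = sets borel" and "i \<noteq> j"
  shows "(\<integral>\<^sup>+y. cond_num N (\<chi> k. y k) \<partial>PiM UNIV (\<lambda>_. \<mu>)) = \<infinity>"
proof -
  interpret \<mu>: prob_space \<mu> by (rule \<mu>(1))
  interpret product_sigma_finite "\<lambda>_::'n. \<mu>"
    by (simp add: product_sigma_finite_def \<mu>.sigma_finite_measure_axioms)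
  define J where "J = {i, j}"
  have [measurable]: "cond_num N \<in> borel_measurable borel"
    by (rule borel_measurable_cond_num[OF N])
  have "(\<lambda>y. y k) \<in> borel_measurable (PiM (- J \<union> J) (\<lambda>_. \<mu>))" for k
    using measurable_component_singleton[of k UNIV "\<lambda>_. \<mu>"]
    by (simp add: measurable_cong_sets[OF refl \<mu>(2)])
  then have "(\<lambda>y. \<chi> k. y k) \<in> borel_measurable (PiM (- J \<union> J) (\<lambda>_. \<mu>))"
    by (rule borel_measurable_vec_lambda)
  then have "(\<lambda>y. cond_num N (\<chi> k. y k)) \<in> borel_measurable (PiM (- J \<union> J) (\<lambda>_. \<mu>))"
    by measurable
  then have "(\<integral>\<^sup>+y. cond_num N (\<chi> k. y k) \<partial>PiM (- J \<union> J) (\<lambda>_. \<mu>))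
      = (\<integral>\<^sup>+\<rho>. (\<integral>\<^sup>+x. cond_num N (\<chi> k. merge (- J) J (\<rho>, x) k) \<partial>PiM J (\<lambda>_. \<mu>)) \<partial>PiM (- J) (\<lambda>_. \<mu>))"
    by (intro product_nn_integral_fold) (simp_all add: J_def)
  then have "(\<integral>\<^sup>+y. cond_num N (\<chi> k. y k) \<partial>PiM UNIV (\<lambda>_. \<mu>))
      = (\<integral>\<^sup>+\<rho>. (\<integral>\<^sup>+x. cond_num N (\<chi> k. merge (- J) J (\<rho>, x) k) \<partial>PiM J (\<lambda>_. \<mu>)) \<partial>PiM (- J) (\<lambda>_. \<mu>))"
    by (simp only: Compl_partition2)
  also have "\<dots> = (\<integral>\<^sup>+\<rho>. \<infinity> \<partial>PiM (- J) (\<lambda>_. \<mu>))"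
  proof (intro nn_integral_cong)
    fix \<rho> :: "'n \<Rightarrow> real^'n"
    have "merge (- J) J (\<rho>, x) = (\<lambda>k. if k \<in> J then x k else \<rho> k)" for x
      by (auto simp: merge_def)
    then show "(\<integral>\<^sup>+x. cond_num N (\<chi> k. merge (- J) J (\<rho>, x) k) \<partial>PiM J (\<lambda>_. \<mu>)) = \<infinity>"
      using nn_integral_cond_num_pair_eq_top[OF N \<mu> \<open>i \<noteq> j\<close>, of \<rho>] by (simp add: J_def)
  qed
  also have "\<dots> = \<infinity>"
  proof -
    have "emeasure (PiM (- J) (\<lambda>_. \<mu>)) (space (PiM (- J) (\<lambda>_. \<mu>))) = 1"
      by (rule prob_space.emeasure_space_1[OF prob_space_PiM[OF \<mu>(1)]])
    then show ?thesis
      unfolding nn_integral_const by simp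
  qed
  finally show ?thesis .
qed

lemma nn_integral_iid_rows:
  fixes X :: "'a \<Rightarrow> 'b::euclidean_space^'n" and g :: "'b^'n \<Rightarrow> ennreal"
  assumes M: "prob_space M" and indep: "prob_space.indep_vars M (\<lambda>_. borel) (\<lambda>i \<omega>. X \<omega> $ i) UNIV"
    and rows: "\<And>i. distr M borel (\<lambda>\<omega>. X \<omega> $ i) = \<mu>" and [measurable]: "g \<in> borel_measurable borel"
  shows "(\<integral>\<^sup>+\<omega>. g (X \<omega>) \<partial>M) = (\<integral>\<^sup>+y. g (\<chi> i. y i) \<partial>PiM UNIV (\<lambda>_. \<mu>))"
proof -
  interpret prob_space M by (rule M)
  have [measurable]: "(\<lambda>\<omega>. X \<omega> $ i) \<in> borel_measurable M" for i
    using indep unfolding indep_vars_def by auto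
  have "(\<lambda>y. \<chi> i. y i) \<in> borel_measurable (PiM UNIV (\<lambda>_. borel :: 'b measure))"
    by (intro borel_measurable_vec_lambda) simp
  then have [measurable]: "(\<lambda>y. g (\<chi> i. y i)) \<in> borel_measurable (PiM UNIV (\<lambda>_. borel :: 'b measure))"
    by measurable
  have "distr M (PiM UNIV (\<lambda>_. borel)) (\<lambda>\<omega>. \<lambda>i\<in>UNIV. X \<omega> $ i) = PiM UNIV (\<lambda>_. \<mu>)"
    using indep indep_vars_iff_distr_eq_PiM[where I=UNIV and M'="\<lambda>_. borel" and X="\<lambda>i \<omega>. X \<omega> $ i"]
    by (simp add: rows)
  moreover have "(\<lambda>\<omega>. \<lambda>i\<in>UNIV. X \<omega> $ i) \<in> measurable M (PiM UNIV (\<lambda>_. borel))"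
    by (rule measurable_restrict) simp
  then have "(\<integral>\<^sup>+\<omega>. g (X \<omega>) \<partial>M)
      = (\<integral>\<^sup>+y. g (\<chi> i. y i) \<partial>distr M (PiM UNIV (\<lambda>_. borel)) (\<lambda>\<omega>. \<lambda>i\<in>UNIV. X \<omega> $ i))"
    by (subst nn_integral_distr) (simp_all add: restrict_UNIV)
  ultimately show ?thesis
    by simp
qed

theorem mainTheorem2:
  fixes M :: "'a measure" and X :: "'a \<Rightarrow> real^'n^'n" and N :: "real^'n^'n \<Rightarrow> real"
  assumes "prob_space M"
    and "CARD('n) \<ge> 2"
    and "prob_space.indep_vars M (\<lambda>_. borel) (\<lambda>i \<omega>. X \<omega> $ i) UNIV"
    and "\<And>i j. distr M borel (\<lambda>\<omega>. X \<omega> $ i) = distr M borel (\<lambda>\<omega>. X \<omega> $ j)"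
    and "is_matrix_norm N"
  shows "(\<integral>\<^sup>+ \<omega>. cond_num N (X \<omega>) \<partial>M) = \<infinity>"
proof -
  interpret prob_space M by (rule assms(1))
  obtain i j :: 'n where "i \<noteq> j"
    using assms(2) card_le_Suc0_iff_eq[of "UNIV :: 'n set"] by auto
  define \<mu> where "\<mu> = distr M borel (\<lambda>\<omega>. X \<omega> $ i)"
  have "prob_space \<mu>"
    using assms(3) unfolding \<mu>_def indep_vars_def by (auto intro: prob_space_distr)
  have "(\<integral>\<^sup>+ \<omega>. cond_num N (X \<omega>) \<partial>M) = (\<integral>\<^sup>+y. cond_num N (\<chi> k. y k) \<partial>PiM UNIV (\<lambda>_. \<mu>))"
    by (rule nn_integral_iid_rows[OF assms(1,3) _ borel_measurable_cond_num[OF assms(5)]])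
      (unfold \<mu>_def, rule assms(4))
  also have "\<dots> = \<infinity>"
    by (rule nn_integral_cond_num_iid_rows_eq_top[OF assms(5) \<open>prob_space \<mu>\<close> _ \<open>i \<noteq> j\<close>])
      (simp add: \<mu>_def)
  finally show ?thesis .
qed

end
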